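(* Let $A,K$ be algebras and $\xi:A\to\mathrm{Out}(K)$ a coupling admitting at least one bimultiplication law covering it. Then the cohomology class of $f(\mu,h)$ in the Hochschild cohomology $HH^3(A,\mathrm{Anni}K)$ (with coefficients in the $A$-bimodule $\mathrm{Anni}K$ determined by $\xi$) is independent of the choice of the bimultiplication law $\mu$ covering $\xi$ and of the hindrance $h$ of $\mu$. This class is denoted $\mathrm{Obs}(\xi)$ (the obstruction of $\xi$).
   Context: All algebras are associative, not necessarily unital, over a field $\mathbb F$. For an algebra $K$, a bimultiplication of $K$ is a pair $(u,v)$ of linear maps $K\to K$ with $k_1u(k_2)=v(k_1)k_2$, $u(k_1k_2)=u(k_1)k_2$, $v(k_1k_2)=k_1v(k_2)$; these form an algebra $\mathrm{Mul}(K)$ with product $(u_1,v_1)(u_2,v_2)=(u_1\circ u_2,\ v_2\circ v_1)$. $\epsilon:K\to\mathrm{Mul}(K)$, $\epsilon(k_0)=(k\mapsto k_0k,\ k\mapsto kk_0)$; $\mathrm{Inn}(K)=\epsilon(K)$, $\mathrm{Out}(K)=\mathrm{Mul}(K)/\mathrm{Inn}(K)$ with projection $\natural$; $\mathrm{Anni}K=\{k: kK=0=Kk\}$. A coupling is an algebra homomorphism $\xi:A\to\mathrm{Out}(K)$. A bimultiplication law covering $\xi$ is a linear map $\mu:A\to\mathrm{Mul}(K)$, $\mu(a)=(u_a,v_a)$, with $\natural\circ\mu=\xi$ and $u_av_b=v_bu_a$ for all $a,b\in A$; then $\mathrm{Anni}K$ is an $A$-bimodule via $a\cdot n=u_a(n)$,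 $n\cdot a=v_a(n)$, independent of the choice of $\mu$. Curvature: $R^\mu(a_1,a_2)=\mu(a_1)\mu(a_2)-\mu(a_1a_2)$. A hindrance is a bilinear $h:A\times A\to K$ with $\epsilon\circ h=R^\mu$. $f(\mu,h)(a_1,a_2,a_3)=u_{a_1}h(a_2,a_3)-h(a_1a_2,a_3)+h(a_1,a_2a_3)-v_{a_3}h(a_1,a_2)$; it is a Hochschild $3$-cocycle with values in $\mathrm{Anni}K$. Hochschild cochains $C^n(A,N)$ are $n$-linear maps $A^n\to N$ with differential $\delta g(a_1,\dots,a_{n+1})=a_1g(a_2,\dots)+\sum_{i=1}^n(-1)^ig(\dots,a_ia_{i+1},\dots)+(-1)^{n+1}g(a_1,\dots,a_n)a_{n+1}$. *)

theory Defs
  imports Complex_Main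
begin

(* An associative, not necessarily unital, algebra over a field 'f is modelled as a
   type 'a of class ring (Isabelle's class ring = associative, distributive,
   additive group, NO unit required) together with a scalar multiplication
   s :: 'f \<Rightarrow> 'a \<Rightarrow> 'a making it an 'f-vector space, such that the product is bilinear. *)
definition algebra_over :: "('f::field \<Rightarrow> 'a::ring \<Rightarrow> 'a) \<Rightarrow> bool" where
  "algebra_over s \<longleftrightarrow> vector_space s \<and>
     (\<forall>c x y. s c (x * y) = s c x * y \<and> s c (x * y) = x * s c y)"

type_synonym 'k bimul = "('k \<Rightarrow> 'k) \<times> ('k \<Rightarrow> 'k)"

definition is_bimul :: "('f::field \<Rightarrow> 'k::ring \<Rightarrow> 'k) \<Rightarrow> 'k bimul \<Rightarrow> bool" where
  "is_bimul sK m \<longleftrightarrow> Vector_Spaces.linear sK sK (fst m) \<and> Vector_Spaces.linear sK sK (snd m) \<and>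
     (\<forall>k1 k2. k1 * fst m k2 = snd m k1 * k2) \<and>
     (\<forall>k1 k2. fst m (k1 * k2) = fst m k1 * k2) \<and>
     (\<forall>k1 k2. snd m (k1 * k2) = k1 * snd m k2)"

definition Mul :: "('f::field \<Rightarrow> 'k::ring \<Rightarrow> 'k) \<Rightarrow> 'k bimul set" where
  "Mul sK = {m. is_bimul sK m}"

definition mul_add :: "'k::ring bimul \<Rightarrow> 'k bimul \<Rightarrow> 'k bimul" where
  "mul_add m1 m2 = (\<lambda>k. fst m1 k + fst m2 k, \<lambda>k. snd m1 k + snd m2 k)"

definition mul_diff :: "'k::ring bimul \<Rightarrow> 'k bimul \<Rightarrow> 'k bimul" where
  "mul_diff m1 m2 = (\<lambda>k. fst m1 k - fst m2 k, \<lambda>k. snd m1 k - snd m2 k)"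

definition mul_scale :: "('f \<Rightarrow> 'k::ring \<Rightarrow> 'k) \<Rightarrow> 'f \<Rightarrow> 'k bimul \<Rightarrow> 'k bimul" where
  "mul_scale sK c m = (\<lambda>k. sK c (fst m k), \<lambda>k. sK c (snd m k))"

definition mul_mult :: "'k::ring bimul \<Rightarrow> 'k bimul \<Rightarrow> 'k bimul" where
  "mul_mult m1 m2 = (fst m1 \<circ> fst m2, snd m2 \<circ> snd m1)"

(* epsilon, Inn, natural projection onto Out = Mul / Inn (elements of Out are cosets) *)
definition eps :: "'k::ring \<Rightarrow> 'k bimul" where
  "eps k0 = (\<lambda>k. k0 * k, \<lambda>k. k * k0)"

definition Inn :: "'k::ring bimul set" where
  "Inn = range eps"

definition natural :: "'k::ring bimul \<Rightarrow> 'k bimul set" where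
  "natural m = {mul_add m i | i. i \<in> Inn}"

definition Out :: "('f::field \<Rightarrow> 'k::ring \<Rightarrow> 'k) \<Rightarrow> 'k bimul set set" where
  "Out sK = natural ` Mul sK"

definition Anni :: "'k::ring set" where
  "Anni = {k. \<forall>x. k * x = 0 \<and> x * k = 0}"

(* coupling: algebra homomorphism xi : A \<rightarrow> Out(K), where the algebra operations on
   Out(K) = Mul(K)/Inn(K) are those induced from representatives *)
definition coupling ::
  "('f::field \<Rightarrow> 'a::ring \<Rightarrow> 'a) \<Rightarrow> ('f \<Rightarrow> 'k::ring \<Rightarrow> 'k) \<Rightarrow> ('a \<Rightarrow> 'k bimul set) \<Rightarrow> bool" where
  "coupling sA sK xi \<longleftrightarrow> (\<forall>a. xi a \<in> Out sK) \<and>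
     (\<forall>a b m1 m2. m1 \<in> xi a \<longrightarrow> m2 \<in> xi b \<longrightarrow>
        natural (mul_add m1 m2) = xi (a + b) \<and> natural (mul_mult m1 m2) = xi (a * b)) \<and>
     (\<forall>c a m. m \<in> xi a \<longrightarrow> natural (mul_scale sK c m) = xi (sA c a))"

definition bimul_law ::
  "('f::field \<Rightarrow> 'a::ring \<Rightarrow> 'a) \<Rightarrow> ('f \<Rightarrow> 'k::ring \<Rightarrow> 'k) \<Rightarrow> ('a \<Rightarrow> 'k bimul set)
     \<Rightarrow> ('a \<Rightarrow> 'k bimul) \<Rightarrow> bool" where
  "bimul_law sA sK xi mu \<longleftrightarrow>
     (\<forall>a. mu a \<in> Mul sK) \<and>
     (\<forall>a b. mu (a + b) = mul_add (mu a) (mu b)) \<and>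
     (\<forall>c a. mu (sA c a) = mul_scale sK c (mu a)) \<and>
     (\<forall>a. natural (mu a) = xi a) \<and>
     (\<forall>a b. fst (mu a) \<circ> snd (mu b) = snd (mu b) \<circ> fst (mu a))"

definition curvature :: "('a::ring \<Rightarrow> 'k::ring bimul) \<Rightarrow> 'a \<Rightarrow> 'a \<Rightarrow> 'k bimul" where
  "curvature mu a1 a2 = mul_diff (mul_mult (mu a1) (mu a2)) (mu (a1 * a2))"

definition bilinear_map ::
  "('f::field \<Rightarrow> 'a::ab_group_add \<Rightarrow> 'a) \<Rightarrow> ('f \<Rightarrow> 'n::ab_group_add \<Rightarrow> 'n) \<Rightarrow> ('a \<Rightarrow> 'a \<Rightarrow> 'n) \<Rightarrow> bool" where
  "bilinear_map sA sN g \<longleftrightarrow> (\<forall>x. Vector_Spaces.linear sA sN (g x)) \<and> (\<forall>y. Vector_Spaces.linear sA sN (\<lambda>x. g x y))"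

definition hindrance ::
  "('f::field \<Rightarrow> 'a::ring \<Rightarrow> 'a) \<Rightarrow> ('f \<Rightarrow> 'k::ring \<Rightarrow> 'k) \<Rightarrow> ('a \<Rightarrow> 'k bimul)
     \<Rightarrow> ('a \<Rightarrow> 'a \<Rightarrow> 'k) \<Rightarrow> bool" where
  "hindrance sA sK mu h \<longleftrightarrow> bilinear_map sA sK h \<and>
     (\<forall>a1 a2. eps (h a1 a2) = curvature mu a1 a2)"

definition obs_cochain :: "('a::ring \<Rightarrow> 'k::ring bimul) \<Rightarrow> ('a \<Rightarrow> 'a \<Rightarrow> 'k) \<Rightarrow> 'a \<Rightarrow> 'a \<Rightarrow> 'a \<Rightarrow> 'k" where
  "obs_cochain mu h a1 a2 a3 =
     fst (mu a1) (h a2 a3) - h (a1 * a2) a3 + h a1 (a2 * a3) - snd (mu a3) (h a1 a2)"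

definition hoch_C2 ::
  "('f::field \<Rightarrow> 'a::ring \<Rightarrow> 'a) \<Rightarrow> ('f \<Rightarrow> 'k::ring \<Rightarrow> 'k) \<Rightarrow> ('a \<Rightarrow> 'a \<Rightarrow> 'k) set" where
  "hoch_C2 sA sK = {g. bilinear_map sA sK g \<and> (\<forall>a1 a2. g a1 a2 \<in> Anni)}"

(* Hochschild differential C^2 \<rightarrow> C^3, bimodule structure a.n = u_a n, n.a = v_a n *)
definition hoch_delta2 :: "('a::ring \<Rightarrow> 'k::ring bimul) \<Rightarrow> ('a \<Rightarrow> 'a \<Rightarrow> 'k) \<Rightarrow> 'a \<Rightarrow> 'a \<Rightarrow> 'a \<Rightarrow> 'k" where
  "hoch_delta2 mu g a1 a2 a3 =
     fst (mu a1) (g a2 a3) - g (a1 * a2) a3 + g a1 (a2 * a3) - snd (mu a3) (g a1 a2)"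

definition same_HH3_class ::
  "('f::field \<Rightarrow> 'a::ring \<Rightarrow> 'a) \<Rightarrow> ('f \<Rightarrow> 'k::ring \<Rightarrow> 'k) \<Rightarrow> ('a \<Rightarrow> 'k bimul)
     \<Rightarrow> ('a \<Rightarrow> 'a \<Rightarrow> 'a \<Rightarrow> 'k) \<Rightarrow> ('a \<Rightarrow> 'a \<Rightarrow> 'a \<Rightarrow> 'k) \<Rightarrow> bool" where
  "same_HH3_class sA sK mu f1 f2 \<longleftrightarrow>
     (\<exists>g \<in> hoch_C2 sA sK. \<forall>a1 a2 a3. f1 a1 a2 a3 - f2 a1 a2 a3 = hoch_delta2 mu g a1 a2 a3)"

end

theory Submission
  imports Defs
begin

text \<open>Two bimultiplication laws covering the same coupling differ by inner bimultiplications,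
  and since \<open>A\<close> has a basis the difference can be chosen as \<open>\<epsilon> \<circ> t\<close> for a linear \<open>t : A \<rightarrow> K\<close>.
  Shifting a law by \<open>\<epsilon> \<circ> t\<close> comes with an explicitly shifted hindrance, and this pair has
  literally the same cochain \<open>f\<close>. Two hindrances of one law differ by a bilinear map into
  \<open>Anni K\<close>, whose Hochschild coboundary is the difference of their cochains; finally the
  coboundary of an \<open>Anni K\<close>-valued cochain does not see inner shifts of the law.\<close>

lemma bilinear_map_diff:
  assumes "bilinear_map sA sN g" and "bilinear_map sA sN g'"
  shows "bilinear_map sA sN (\<lambda>x y. g x y - g' x y)"
  using assms
  by (simp add: bilinear_map_def module_hom_iff_linear[symmetric] module_hom_iff
      module.scale_right_diff_distrib)

lemma eps_eq_imp_diff_in_Anni: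
  assumes "eps k = eps k'"
  shows "k - k' \<in> Anni"
proof -
  have "k * x = k' * x" and "x * k = x * k'" for x
    using fun_cong[OF arg_cong[OF assms, of fst], of x] fun_cong[OF arg_cong[OF assms, of snd], of x]
    by (simp_all add: eps_def)
  then show ?thesis
    by (simp add: Anni_def left_diff_distrib right_diff_distrib)
qed

lemma natural_eq_imp_inner_diff:
  assumes "natural m' = natural m"
  shows "\<exists>k. m' = mul_add m (eps k)"
proof -
  have "mul_add m' (eps 0) = m'"
    by (simp add: mul_add_def eps_def)
  then have "m' \<in> natural m'"
    unfolding natural_def Inn_def by (metis (mono_tags) mem_Collect_eq rangeI)
  then show ?thesis
    using assms unfolding natural_def Inn_def by blast
qed

lemma exists_linear_multiplier:
  fixes sA :: "'f::field \<Rightarrow> 'a::ring \<Rightarrow> 'a" and sK :: "'f \<Rightarrow> 'k::ring \<Rightarrow> 'k"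
    and d1 d2 :: "'a \<Rightarrow> 'k \<Rightarrow> 'k"
  assumes A: "algebra_over sA" and K: "algebra_over sK"
    and d1_add: "\<And>a b x. d1 (a + b) x = d1 a x + d1 b x"
    and d1_scale: "\<And>c a x. d1 (sA c a) x = sK c (d1 a x)"
    and d2_add: "\<And>a b x. d2 (a + b) x = d2 a x + d2 b x"
    and d2_scale: "\<And>c a x. d2 (sA c a) x = sK c (d2 a x)"
    and multiplier: "\<And>a. \<exists>k. \<forall>x. k * x = d1 a x \<and> x * k = d2 a x"
  shows "\<exists>t. Vector_Spaces.linear sA sK t \<and> (\<forall>a x. t a * x = d1 a x \<and> x * t a = d2 a x)"
proof -
  interpret vA: vector_space sA using A by (simp add: algebra_over_def)
  interpret vK: vector_space sK using K by (simp add: algebra_over_def)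
  interpret vector_space_pair sA sK by unfold_locales
  have K_scale: "\<And>c x y. sK c x * y = sK c (x * y)" "\<And>c x y. x * sK c y = sK c (x * y)"
    using K unfolding algebra_over_def by metis+
  obtain B where B: "vA.independent B" "UNIV \<subseteq> vA.span B"
    using vA.basis_exists[of UNIV] by blast
  obtain k where k: "\<And>a x. k a * x = d1 a x \<and> x * k a = d2 a x"
    using multiplier by metis
  define t where "t = construct B k"
  have t_linear: "Vector_Spaces.linear sA sK t"
    unfolding t_def using B(1) by (rule linear_construct)
  have t_basis: "\<And>b. b \<in> B \<Longrightarrow> t b = k b"
    unfolding t_def using B(1) by (rule construct_basis)
  have t_add: "\<And>a b. t (a + b) = t a + t b" and t_scale: "\<And>c a. t (sA c a) = sK c (t a)"
    using t_linear by (simp_all add: linear_add linear_scale)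
  have "t a * x = d1 a x \<and> x * t a = d2 a x" for a x
  proof
    have "Vector_Spaces.linear sA sK (\<lambda>a. t a * x)" "Vector_Spaces.linear sA sK (\<lambda>a. d1 a x)"
      by (simp_all add: Vector_Spaces.linear_iff vA.vector_space_axioms vK.vector_space_axioms
          t_add t_scale distrib_right K_scale d1_add d1_scale)
    then show "t a * x = d1 a x"
      by (rule linear_eq_on[of _ _ a B]) (use B t_basis k in auto)
    have "Vector_Spaces.linear sA sK (\<lambda>a. x * t a)" "Vector_Spaces.linear sA sK (\<lambda>a. d2 a x)"
      by (simp_all add: Vector_Spaces.linear_iff vA.vector_space_axioms vK.vector_space_axioms
          t_add t_scale distrib_left K_scale d2_add d2_scale)
    then show "x * t a = d2 a x"
      by (rule linear_eq_on[of _ _ a B]) (use B t_basis k in auto)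
  qed
  with t_linear show ?thesis by blast
qed

definition inner_shift :: "('a \<Rightarrow> 'k::ring bimul) \<Rightarrow> ('a \<Rightarrow> 'k) \<Rightarrow> 'a \<Rightarrow> 'k bimul" where
  "inner_shift mu t a = mul_add (mu a) (eps (t a))"

text \<open>Expanding \<open>(u\<^sub>a + L\<^bsub>t a\<^esub>)(u\<^sub>b + L\<^bsub>t b\<^esub>) - (u\<^bsub>ab\<^esub> + L\<^bsub>t(ab)\<^esub>)\<close>, using
  \<open>u\<^sub>a \<circ> L\<^sub>k = L\<^bsub>u\<^sub>a k\<^esub>\<close> and \<open>L\<^sub>k \<circ> u\<^sub>b = L\<^bsub>v\<^sub>b k\<^esub>\<close>, gives the left multiplication by
  this element.\<close>

definition shifted_hindrance ::
  "('a::ring \<Rightarrow> 'k::ring bimul) \<Rightarrow> ('a \<Rightarrow> 'a \<Rightarrow> 'k) \<Rightarrow> ('a \<Rightarrow> 'k) \<Rightarrow> 'a \<Rightarrow> 'a \<Rightarrow> 'k" where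
  "shifted_hindrance mu h t a b = h a b + fst (mu a) (t b) + snd (mu b) (t a) + t a * t b - t (a * b)"

lemma hoch_delta2_inner_shift:
  assumes "\<And>a b. g a b \<in> Anni"
  shows "hoch_delta2 (inner_shift mu t) g = hoch_delta2 mu g"
  using assms by (simp add: fun_eq_iff hoch_delta2_def inner_shift_def mul_add_def eps_def Anni_def)

locale covering_law =
  fixes sA :: "'f::field \<Rightarrow> 'a::ring \<Rightarrow> 'a" and sK :: "'f \<Rightarrow> 'k::ring \<Rightarrow> 'k"
    and xi :: "'a \<Rightarrow> 'k bimul set" and mu :: "'a \<Rightarrow> 'k bimul"
  assumes algebra_A: "algebra_over sA" and algebra_K: "algebra_over sK"
    and law: "bimul_law sA sK xi mu"
begin

abbreviation u :: "'a \<Rightarrow> 'k \<Rightarrow> 'k" where "u a \<equiv> fst (mu a)"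
abbreviation v :: "'a \<Rightarrow> 'k \<Rightarrow> 'k" where "v a \<equiv> snd (mu a)"

sublocale A: vector_space sA using algebra_A by (simp add: algebra_over_def)
sublocale K: vector_space sK using algebra_K by (simp add: algebra_over_def)

sublocale K_pair: vector_space_pair sK sK ..

lemma A_scale_mult: "sA c x * y = sA c (x * y)" "x * sA c y = sA c (x * y)"
  using algebra_A unfolding algebra_over_def by metis+

lemma K_scale_mult: "sK c x * y = sK c (x * y)" "x * sK c y = sK c (x * y)"
  using algebra_K unfolding algebra_over_def by metis+

lemma is_bimul: "is_bimul sK (mu a)"
  using law by (simp add: bimul_law_def Mul_def)

lemma linear_u: "Vector_Spaces.linear sK sK (u a)" and linear_v: "Vector_Spaces.linear sK sK (v a)"
  using is_bimul by (simp_all add: is_bimul_def)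

lemma u_add: "u a (x + y) = u a x + u a y" and u_diff: "u a (x - y) = u a x - u a y"
  and u_scale: "u a (sK c x) = sK c (u a x)"
  and v_add: "v a (x + y) = v a x + v a y" and v_diff: "v a (x - y) = v a x - v a y"
  and v_scale: "v a (sK c x) = sK c (v a x)"
  by (simp_all add: K_pair.linear_add K_pair.linear_diff K_pair.linear_scale linear_u linear_v)

lemma u_mult: "u a (x * y) = u a x * y" and v_mult: "v a (x * y) = x * v a y"
  and v_mult_eq_mult_u: "v a x * y = x * u a y"
  using is_bimul by (simp_all add: is_bimul_def)

lemma u_v_commute: "u a (v b x) = v b (u a x)"
  using law by (simp add: bimul_law_def fun_eq_iff)

lemma law_add: "u (a + b) x = u a x + u b x" "v (a + b) x = v a x + v b x"
  using law by (simp_all add: bimul_law_def mul_add_def)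

lemma law_scale: "u (sA c a) x = sK c (u a x)" "v (sA c a) x = sK c (v a x)"
  using law by (simp_all add: bimul_law_def mul_scale_def)

lemma hindrance_left: "hindrance sA sK mu h \<Longrightarrow> u a (u b x) = u (a * b) x + h a b * x"
  and hindrance_right: "hindrance sA sK mu h \<Longrightarrow> v b (v a x) = v (a * b) x + x * h a b"
  by (simp_all add: hindrance_def curvature_def eps_def mul_diff_def mul_mult_def prod_eq_iff
      fun_eq_iff eq_diff_eq add.commute)

lemma obs_cochain_diff:
  "obs_cochain mu h a1 a2 a3 - obs_cochain mu h' a1 a2 a3 =
     hoch_delta2 mu (\<lambda>a b. h a b - h' a b) a1 a2 a3"
  by (simp add: obs_cochain_def hoch_delta2_def u_diff v_diff algebra_simps)

lemma hindrance_diff_in_hoch_C2: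
  assumes "hindrance sA sK mu h" and "hindrance sA sK mu h'"
  shows "(\<lambda>a b. h a b - h' a b) \<in> hoch_C2 sA sK"
  using assms
  by (simp add: hoch_C2_def hindrance_def bilinear_map_diff eps_eq_imp_diff_in_Anni)

lemma curvature_inner_shift:
  assumes "hindrance sA sK mu h"
  shows "curvature (inner_shift mu t) a b = eps (shifted_hindrance mu h t a b)"
  by (simp add: prod_eq_iff fun_eq_iff curvature_def inner_shift_def shifted_hindrance_def
      mul_diff_def mul_mult_def mul_add_def eps_def u_add v_add u_mult v_mult v_mult_eq_mult_u
      hindrance_left[OF assms] hindrance_right[OF assms] algebra_simps mult.assoc)

lemma bilinear_shifted_hindrance:
  assumes "bilinear_map sA sK h" and "Vector_Spaces.linear sA sK t"
  shows "bilinear_map sA sK (shifted_hindrance mu h t)"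
proof -
  have h: "h (a + a') b = h a b + h a' b" "h (sA c a) b = sK c (h a b)"
    "h a (b + b') = h a b + h a b'" "h a (sA c b) = sK c (h a b)" for a a' b b' c
    using assms(1) by (simp_all add: bilinear_map_def Vector_Spaces.linear_iff)
  have t: "t (a + b) = t a + t b" "t (sA c a) = sK c (t a)" for a b c
    using assms(2) by (simp_all add: Vector_Spaces.linear_iff)
  show ?thesis
    by (simp add: bilinear_map_def Vector_Spaces.linear_iff A.vector_space_axioms
        K.vector_space_axioms shifted_hindrance_def h t law_add law_scale u_add u_scale v_add
        v_scale A_scale_mult K_scale_mult distrib_left distrib_right K.scale_right_distrib
        K.scale_right_diff_distrib algebra_simps)
qed

lemma obs_cochain_inner_shift:
  assumes "hindrance sA sK mu h"
  shows "obs_cochain (inner_shift mu t) (shifted_hindrance mu h t) = obs_cochain mu h"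
  by (simp add: fun_eq_iff obs_cochain_def inner_shift_def shifted_hindrance_def mul_add_def
      eps_def u_add u_diff v_add v_diff u_mult v_mult v_mult_eq_mult_u u_v_commute
      hindrance_left[OF assms] hindrance_right[OF assms] algebra_simps mult.assoc)

lemma hindrance_inner_shift:
  assumes "hindrance sA sK mu h" and "Vector_Spaces.linear sA sK t"
  shows "hindrance sA sK (inner_shift mu t) (shifted_hindrance mu h t)"
  using assms bilinear_shifted_hindrance curvature_inner_shift by (simp add: hindrance_def)

lemma covering_law_eq_inner_shift:
  assumes law': "bimul_law sA sK xi mu'"
  shows "\<exists>t. Vector_Spaces.linear sA sK t \<and> mu' = inner_shift mu t"
proof -
  interpret mu': covering_law sA sK xi mu'
    using algebra_A algebra_K law' by unfold_locales
  have "\<exists>k. \<forall>x. k * x = mu'.u a x - u a x \<and> x * k = mu'.v a x - v a x" for a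
  proof -
    have "natural (mu' a) = natural (mu a)"
      using law law' by (simp add: bimul_law_def)
    then obtain k where "mu' a = mul_add (mu a) (eps k)"
      using natural_eq_imp_inner_diff by blast
    then show ?thesis
      by (auto simp: mul_add_def eps_def)
  qed
  then obtain t where t: "Vector_Spaces.linear sA sK t"
    and "\<And>a x. t a * x = mu'.u a x - u a x \<and> x * t a = mu'.v a x - v a x"
    using exists_linear_multiplier[OF algebra_A algebra_K, of "\<lambda>a x. mu'.u a x - u a x"
        "\<lambda>a x. mu'.v a x - v a x"]
    by (auto simp: law_add law_scale mu'.law_add mu'.law_scale K.scale_right_diff_distrib)
  then have "mu' = inner_shift mu t"
    by (simp add: fun_eq_iff prod_eq_iff inner_shift_def mul_add_def eps_def)
  with t show ?thesis by blast
qed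

end

theorem mainTheorem8:
  fixes sA :: "'f::field \<Rightarrow> 'a::ring \<Rightarrow> 'a"
    and sK :: "'f \<Rightarrow> 'k::ring \<Rightarrow> 'k"
    and xi :: "'a \<Rightarrow> 'k bimul set"
  assumes "algebra_over sA" and "algebra_over sK"
    and "coupling sA sK xi"
    and "\<exists>mu. bimul_law sA sK xi mu"
  shows "\<forall>mu h mu' h'. bimul_law sA sK xi mu \<longrightarrow> hindrance sA sK mu h \<longrightarrow>
           bimul_law sA sK xi mu' \<longrightarrow> hindrance sA sK mu' h' \<longrightarrow>
           same_HH3_class sA sK mu (obs_cochain mu h) (obs_cochain mu' h')"
proof (intro allI impI)
  fix mu h mu' h'
  assume law: "bimul_law sA sK xi mu" and h: "hindrance sA sK mu h"
    and law': "bimul_law sA sK xi mu'" and h': "hindrance sA sK mu' h'"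
  interpret covering_law sA sK xi mu using assms law by unfold_locales
  interpret mu': covering_law sA sK xi mu' using assms law' by unfold_locales
  obtain t where t: "Vector_Spaces.linear sA sK t" and mu': "mu' = inner_shift mu t"
    using covering_law_eq_inner_shift[OF law'] by blast
  define h\<^sub>t where "h\<^sub>t = shifted_hindrance mu h t"
  define g where "g = (\<lambda>a b. h\<^sub>t a b - h' a b)"
  have g: "g \<in> hoch_C2 sA sK"
    unfolding g_def h\<^sub>t_def using mu'.hindrance_diff_in_hoch_C2 hindrance_inner_shift[OF h t] h' mu'
    by blast
  have "obs_cochain mu h a1 a2 a3 - obs_cochain mu' h' a1 a2 a3 = hoch_delta2 mu g a1 a2 a3"
    for a1 a2 a3
  proof -
    have "obs_cochain mu h a1 a2 a3 - obs_cochain mu' h' a1 a2 a3 =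
        obs_cochain mu' h\<^sub>t a1 a2 a3 - obs_cochain mu' h' a1 a2 a3"
      using obs_cochain_inner_shift[OF h] mu' by (simp add: h\<^sub>t_def)
    also have "\<dots> = hoch_delta2 mu' g a1 a2 a3"
      unfolding g_def by (rule mu'.obs_cochain_diff)
    also have "\<dots> = hoch_delta2 mu g a1 a2 a3"
      using g mu' by (simp add: hoch_C2_def hoch_delta2_inner_shift)
    finally show ?thesis .
  qed
  with g show "same_HH3_class sA sK mu (obs_cochain mu h) (obs_cochain mu' h')"
    unfolding same_HH3_class_def by blast
qed

end
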